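(* Let $L$ be a finite-dimensional solvable, non-nilpotent Lie algebra over a finite field $\mathbb{F}_q$. If $\dim\mathrm{nil}(L)$ is even and divides $\dim\mathrm{nil}_L(x)$ for all $x\in L$, then $\Gamma_{\mathfrak{N}}(L)$ is not Eulerian.
   Context: $\langle a,b\rangle$ denotes the Lie subalgebra generated by $a,b$; $\mathrm{nil}_L(h)=\{x\in L\mid \langle h,x\rangle \text{ is nilpotent}\}$ and $\mathrm{nil}(L)=\{x\in L\mid \langle h,x\rangle \text{ is nilpotent for all } h\in L\}$ (here assumed to be subspaces so that their dimensions make sense). The nilpotent graph $\Gamma_{\mathfrak{N}}(L)$ is the simple undirected graph with vertex set $L\setminus\mathrm{nil}(L)$ in which distinct vertices $x,y$ are adjacent iff $\langle x,y\rangle$ is nilpotent. A graph is Eulerian if it has a closed walk using every edge exactly once (equivalently, for a connected graph, every vertex has even degree). *)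

theory Defs
  imports Main "HOL.Vector_Spaces"
begin

definition lie_algebra :: "('k::field \<Rightarrow> 'L::ab_group_add \<Rightarrow> 'L) \<Rightarrow> ('L \<Rightarrow> 'L \<Rightarrow> 'L) \<Rightarrow> bool" where
  "lie_algebra sc br \<longleftrightarrow> vector_space sc
     \<and> (\<forall>x y z. br (x + y) z = br x z + br y z)
     \<and> (\<forall>x y z. br x (y + z) = br x y + br x z)
     \<and> (\<forall>a x y. br (sc a x) y = sc a (br x y))
     \<and> (\<forall>a x y. br x (sc a y) = sc a (br x y))
     \<and> (\<forall>x. br x x = 0)
     \<and> (\<forall>x y z. br x (br y z) + br y (br z x) + br z (br x y) = 0)"

definition fin_dim :: "('k::field \<Rightarrow> 'L::ab_group_add \<Rightarrow> 'L) \<Rightarrow> bool" where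
  "fin_dim sc \<longleftrightarrow> (\<exists>B. finite B \<and> module.span sc B = UNIV)"

definition subalgebra :: "('k::field \<Rightarrow> 'L::ab_group_add \<Rightarrow> 'L) \<Rightarrow> ('L \<Rightarrow> 'L \<Rightarrow> 'L) \<Rightarrow> 'L set \<Rightarrow> bool" where
  "subalgebra sc br S \<longleftrightarrow> module.subspace sc S \<and> (\<forall>x\<in>S. \<forall>y\<in>S. br x y \<in> S)"

definition gen2 :: "('k::field \<Rightarrow> 'L::ab_group_add \<Rightarrow> 'L) \<Rightarrow> ('L \<Rightarrow> 'L \<Rightarrow> 'L) \<Rightarrow> 'L \<Rightarrow> 'L \<Rightarrow> 'L set" where
  "gen2 sc br a b = \<Inter>{S. subalgebra sc br S \<and> a \<in> S \<and> b \<in> S}"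

text \<open>Lower central series of a subalgebra S: S^1 = S, S^(k+1) = span [S, S^k]
 (indexed from 0 here).\<close>
fun lcs :: "('k::field \<Rightarrow> 'L::ab_group_add \<Rightarrow> 'L) \<Rightarrow> ('L \<Rightarrow> 'L \<Rightarrow> 'L) \<Rightarrow> 'L set \<Rightarrow> nat \<Rightarrow> 'L set" where
  "lcs sc br S 0 = S"
| "lcs sc br S (Suc k) = module.span sc {br x y | x y. x \<in> S \<and> y \<in> lcs sc br S k}"

definition nilpotent_alg :: "('k::field \<Rightarrow> 'L::ab_group_add \<Rightarrow> 'L) \<Rightarrow> ('L \<Rightarrow> 'L \<Rightarrow> 'L) \<Rightarrow> 'L set \<Rightarrow> bool" where
  "nilpotent_alg sc br S \<longleftrightarrow> (\<exists>k. lcs sc br S k = {0})"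

fun derived :: "('k::field \<Rightarrow> 'L::ab_group_add \<Rightarrow> 'L) \<Rightarrow> ('L \<Rightarrow> 'L \<Rightarrow> 'L) \<Rightarrow> nat \<Rightarrow> 'L set" where
  "derived sc br 0 = UNIV"
| "derived sc br (Suc k) = module.span sc {br x y | x y. x \<in> derived sc br k \<and> y \<in> derived sc br k}"

definition solvable_alg :: "('k::field \<Rightarrow> 'L::ab_group_add \<Rightarrow> 'L) \<Rightarrow> ('L \<Rightarrow> 'L \<Rightarrow> 'L) \<Rightarrow> bool" where
  "solvable_alg sc br \<longleftrightarrow> (\<exists>k. derived sc br k = {0})"

definition nilL :: "('k::field \<Rightarrow> 'L::ab_group_add \<Rightarrow> 'L) \<Rightarrow> ('L \<Rightarrow> 'L \<Rightarrow> 'L) \<Rightarrow> 'L \<Rightarrow> 'L set" where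
  "nilL sc br h = {x. nilpotent_alg sc br (gen2 sc br h x)}"

definition nil :: "('k::field \<Rightarrow> 'L::ab_group_add \<Rightarrow> 'L) \<Rightarrow> ('L \<Rightarrow> 'L \<Rightarrow> 'L) \<Rightarrow> 'L set" where
  "nil sc br = {x. \<forall>h. nilpotent_alg sc br (gen2 sc br h x)}"

definition graph_edges :: "'a set \<Rightarrow> ('a \<Rightarrow> 'a \<Rightarrow> bool) \<Rightarrow> 'a set set" where
  "graph_edges V E = {{x, y} | x y. x \<in> V \<and> y \<in> V \<and> x \<noteq> y \<and> E x y}"

definition walk_edges :: "'a list \<Rightarrow> 'a set list" where
  "walk_edges ws = map (\<lambda>i. {ws ! i, ws ! Suc i}) [0..<length ws - 1]"

definition eulerian :: "'a set \<Rightarrow> ('a \<Rightarrow> 'a \<Rightarrow> bool) \<Rightarrow> bool" where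
  "eulerian V E \<longleftrightarrow> (\<exists>ws. ws \<noteq> [] \<and> set ws \<subseteq> V \<and> hd ws = last ws
      \<and> (\<forall>i < length ws - 1. ws ! i \<noteq> ws ! Suc i \<and> E (ws ! i) (ws ! Suc i))
      \<and> distinct (walk_edges ws) \<and> set (walk_edges ws) = graph_edges V E)"

definition nilpotent_graph_eulerian :: "('k::field \<Rightarrow> 'L::ab_group_add \<Rightarrow> 'L) \<Rightarrow> ('L \<Rightarrow> 'L \<Rightarrow> 'L) \<Rightarrow> bool" where
  "nilpotent_graph_eulerian sc br \<longleftrightarrow>
     eulerian (UNIV - nil sc br) (\<lambda>x y. nilpotent_alg sc br (gen2 sc br x y))"

end

theory Submission
  imports Defs
begin

text \<open>
  An Eulerian graph has only vertices of even degree, and in \<open>\<Gamma>\<^sub>\<N>(L)\<close> the degree of a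
  vertex \<open>x\<close> is \<open>|nil\<^sub>L(x)| - |nil(L)| - 1\<close>. Both \<open>nil\<^sub>L(x) \<ni> x\<close> and \<open>nil(L)\<close> are nonzero
  subspaces over \<open>\<bbbF>\<^sub>q\<close> (the latter because its dimension divides the positive dimension
  of the former), so their cardinalities have the parity of \<open>q\<close>, and the degree is odd.
  The parity is obtained from fixed-point-free involutions: translation by a nonzero
  vector in characteristic 2, negation on the nonzero vectors otherwise.
\<close>

lemma even_card_if_involution:
  assumes "finite A" "\<And>x. x \<in> A \<Longrightarrow> f x \<in> A" "\<And>x. x \<in> A \<Longrightarrow> f (f x) = x"
    "\<And>x. x \<in> A \<Longrightarrow> f x \<noteq> x"
  shows "even (card A)"
  using assms
proof (induction "card A" arbitrary: A rule: less_induct)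
  case less
  show ?case
  proof (cases "A = {}")
    case False
    then obtain a where a: "a \<in> A" by blast
    define B where "B = A - {a, f a}"
    have pair: "{a, f a} \<subseteq> A" "card {a, f a} = 2"
      using less.prems(2,4)[OF a] a by auto
    then have card_A: "card A = card B + 2"
      using card_mono[OF less.prems(1) pair(1)] by (simp add: B_def card_Diff_subset finite_subset)
    have "f x \<in> B" if "x \<in> B" for x
      using that less.prems a by (auto simp: B_def) metis+
    with less.prems have "even (card B)"
      by (intro less.hyps) (auto simp: card_A B_def)
    then show ?thesis by (simp add: card_A)
  qed simp
qed

definition graph_degree :: "'a set \<Rightarrow> ('a \<Rightarrow> 'a \<Rightarrow> bool) \<Rightarrow> 'a \<Rightarrow> nat" where
  "graph_degree V E x = card {e \<in> graph_edges V E. x \<in> e}"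

lemma even_length_filter_walk_edges:
  assumes "ws \<noteq> []" "hd ws = last ws" "\<forall>i < length ws - 1. ws ! i \<noteq> ws ! Suc i"
  shows "even (length (filter (\<lambda>e. x \<in> e) (walk_edges ws)))"
proof -
  define n where "n = length ws - 1"
  define at where "at i = (of_bool (ws ! i = x) :: nat)" for i
  have closed: "at n = at 0"
    using assms(1,2) by (simp add: at_def n_def hd_conv_nth last_conv_nth)
  have length_filter_map: "length (filter P (map f [0..<m])) = (\<Sum>i<m. of_bool (P (f i)))"
    for P and f :: "nat \<Rightarrow> 'a set" and m
    by (induction m) auto
  have "length (filter (\<lambda>e. x \<in> e) (walk_edges ws)) = (\<Sum>i<n. at i + at (Suc i))"
    unfolding walk_edges_def n_def[symmetric] length_filter_map
    using assms(3) by (intro sum.cong) (auto simp: at_def n_def)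
  also have "\<dots> = (\<Sum>i<n. at i) + (\<Sum>i<n. at (Suc i))"
    by (rule sum.distrib)
  also have "(\<Sum>i<n. at (Suc i)) = (\<Sum>i<n. at i)"
    \<comment> \<open>adding \<open>at 0 = at n\<close> to either side gives the sum over \<open>{..n}\<close>\<close>
    using sum.lessThan_Suc_shift[of at n] sum.lessThan_Suc[of at n] closed by simp
  finally show ?thesis by simp
qed

lemma eulerian_imp_even_degree:
  assumes "eulerian V E"
  shows "even (graph_degree V E x)"
proof -
  obtain ws where ws: "ws \<noteq> []" "hd ws = last ws"
      "\<forall>i < length ws - 1. ws ! i \<noteq> ws ! Suc i"
      "distinct (walk_edges ws)" "set (walk_edges ws) = graph_edges V E"
    using assms unfolding eulerian_def by blast
  have "graph_degree V E x = length (filter (\<lambda>e. x \<in> e) (walk_edges ws))"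
    using ws(4,5) by (auto simp: graph_degree_def distinct_length_filter intro: arg_cong[where f = card])
  with even_length_filter_walk_edges[OF ws(1-3)] show ?thesis by simp
qed

lemma eulerian_imp_nonempty: "eulerian V E \<Longrightarrow> V \<noteq> {}"
  unfolding eulerian_def by (auto simp: neq_Nil_conv)

lemma graph_degree_eq_card_neighbours:
  assumes "x \<in> V" "\<And>a b. E a b \<Longrightarrow> E b a"
  shows "graph_degree V E x = card {y \<in> V. y \<noteq> x \<and> E x y}"
proof -
  have "{e \<in> graph_edges V E. x \<in> e} = (\<lambda>y. {x, y}) ` {y \<in> V. y \<noteq> x \<and> E x y}"
    using assms unfolding graph_edges_def by (auto simp: insert_commute)
  moreover have "inj_on (\<lambda>y. {x, y}) {y \<in> V. y \<noteq> x \<and> E x y}"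
    by (auto simp: inj_on_def doubleton_eq_iff)
  ultimately show ?thesis
    by (simp add: graph_degree_def card_image)
qed

lemma fin_dim_imp_finite_dimensional_vector_space:
  assumes "vector_space sc" "fin_dim sc"
  obtains Basis where "finite_dimensional_vector_space sc Basis"
proof -
  interpret vector_space sc by fact
  obtain T where T: "finite T" "span T = UNIV"
    using assms(2) unfolding fin_dim_def by blast
  obtain B where B: "independent B" "span B = UNIV"
    using basis_exists[of UNIV] by (metis top_le)
  have "finite B"
    using independent_span_bound[OF T(1) B(1)] T(2) by simp
  with B show ?thesis
    by (intro that) (unfold_locales)
qed

context vector_space
begin

lemma finite_span:
  assumes "finite (UNIV :: 'a set)" "finite S"
  shows "finite (span S)"
  using assms(2)
proof induction
  case (insert a S)
  have "span (insert a S) \<subseteq> (\<lambda>(k, y). y + k *s a) ` (UNIV \<times> span S)"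
    unfolding span_insert by (force simp: image_iff)
  moreover have "finite ((UNIV :: 'a set) \<times> span S)"
    using assms(1) insert.IH by (rule finite_cartesian_product)
  ultimately show ?case
    using finite_subset by blast
qed simp

lemma even_card_subspace_iff:
  assumes "subspace S" "finite S" "s \<in> S" "s \<noteq> 0"
  shows "even (card S) \<longleftrightarrow> (1::'a) + 1 = 0"
proof -
  have double: "y + y = (1 + 1) *s y" for y
    by (simp only: scale_left_distrib scale_one)
  show ?thesis
  proof (cases "(1::'a) + 1 = 0")
    case True
    then have "s + s = 0" using double by simp
    then have "y + s + s = y" for y by (simp add: add.assoc)
    with True show ?thesis
      using assms by (auto intro!: even_card_if_involution[where f = "\<lambda>y. y + s"] subspace_add)
  next
    case False
    then have "- y \<noteq> y" if "y \<noteq> 0" for y :: 'b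
      using that double[of y] by (metis add.right_inverse scale_eq_0_iff)
    then have "even (card (S - {0}))"
      using assms by (intro even_card_if_involution[where f = uminus]) (auto simp: subspace_neg)
    moreover have "card S = Suc (card (S - {0}))"
      using card_Suc_Diff1[OF assms(2) subspace_0[OF assms(1)]] by simp
    ultimately show ?thesis using False by simp
  qed
qed

end

lemma gen2_commute: "gen2 sc br a b = gen2 sc br b a"
  unfolding gen2_def by (rule arg_cong[where f = Inter]) auto

lemma nilpotent_alg_if_abelian:
  assumes "vector_space sc" "\<forall>u\<in>S. \<forall>v\<in>S. br u v = 0"
  shows "nilpotent_alg sc br S"
proof -
  interpret vector_space sc by fact
  have "{br u v | u v. u \<in> S \<and> v \<in> lcs sc br S 0} \<subseteq> {0}"
    using assms(2) by auto
  then have "lcs sc br S (Suc 0) \<subseteq> {0}"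
    by (simp add: span_minimal)
  then have "lcs sc br S (Suc 0) = {0}"
    using span_zero by auto
  then show ?thesis
    unfolding nilpotent_alg_def by blast
qed

lemma mem_nilL_self:
  assumes "lie_algebra sc br"
  shows "x \<in> nilL sc br x"
proof -
  interpret vector_space sc
    using assms unfolding lie_algebra_def by simp
  have scale_br: "br (sc a u) v = sc a (br u v)" "br u (sc a v) = sc a (br u v)" "br u u = 0"
    for a u v
    using assms unfolding lie_algebra_def by auto
  have abelian: "\<forall>u\<in>span {x}. \<forall>v\<in>span {x}. br u v = 0"
    by (auto simp: span_singleton scale_br)
  then have "subalgebra sc br (span {x})"
    unfolding subalgebra_def by (simp add: span_zero)
  then have "gen2 sc br x x \<subseteq> span {x}"
    unfolding gen2_def by (blast intro: span_base)
  with abelian have "nilpotent_alg sc br (gen2 sc br x x)"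
    by (intro nilpotent_alg_if_abelian) (auto intro: vector_space_axioms)
  then show ?thesis
    unfolding nilL_def by simp
qed

lemma nil_subset_nilL: "nil sc br \<subseteq> nilL sc br x"
  unfolding nil_def nilL_def by auto

lemma nilpotent_graph_degree:
  assumes "x \<notin> nil sc br"
  shows "graph_degree (UNIV - nil sc br) (\<lambda>x y. nilpotent_alg sc br (gen2 sc br x y)) x
    = card (nilL sc br x - nil sc br - {x})"
  using assms by (subst graph_degree_eq_card_neighbours)
    (auto simp: gen2_commute nilL_def intro: arg_cong[where f = card])

lemma odd_card_Diff_Diff_singleton:
  assumes "finite M" "N \<subseteq> M" "x \<in> M - N" "even (card M) \<longleftrightarrow> even (card N)"
  shows "odd (card (M - N - {x}))"
proof -
  have "card N < card M"
    using assms(1-3) by (metis DiffE psubsetI psubset_card_mono)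
  moreover have "card (M - N - {x}) = card M - card N - 1"
    using assms(1-3) by (simp add: card_Diff_subset finite_subset)
  ultimately show ?thesis
    using assms(4) by auto
qed

theorem corollary4p9:
  fixes sc :: "'k::{field, finite} \<Rightarrow> 'L::ab_group_add \<Rightarrow> 'L"
    and br :: "'L \<Rightarrow> 'L \<Rightarrow> 'L"
  assumes "lie_algebra sc br"
    and "fin_dim sc"
    and "solvable_alg sc br"
    and "\<not> nilpotent_alg sc br UNIV"
    and "module.subspace sc (nil sc br)"
    and "\<forall>x. module.subspace sc (nilL sc br x)"
    and "even (vector_space.dim sc (nil sc br))"
    and "\<forall>x. vector_space.dim sc (nil sc br) dvd vector_space.dim sc (nilL sc br x)"
  shows "\<not> nilpotent_graph_eulerian sc br"
proof
  assume eulerian: "nilpotent_graph_eulerian sc br"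
  have "vector_space sc"
    using assms(1) unfolding lie_algebra_def by simp
  then obtain Basis where "finite_dimensional_vector_space sc Basis"
    using assms(2) by (rule fin_dim_imp_finite_dimensional_vector_space)
  then interpret finite_dimensional_vector_space sc Basis .
  have finite_L: "finite A" for A :: "'L set"
    using finite_span[OF finite_UNIV finite_Basis] span_Basis by (metis finite_subset subset_UNIV)
  obtain x where x: "x \<notin> nil sc br"
    using eulerian_imp_nonempty eulerian unfolding nilpotent_graph_eulerian_def by blast
  define N M where "N = nil sc br" and "M = nilL sc br x"
  have "x \<in> M" "N \<subseteq> M" "x \<notin> N"
    using mem_nilL_self[OF assms(1), of x] nil_subset_nilL[of sc br x] x by (auto simp: M_def N_def)
  moreover have "x \<noteq> 0"
    using x subspace_0[OF assms(5)] by auto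
  ultimately have "dim M \<noteq> 0"
    by auto
  then have "dim N \<noteq> 0"
    using assms(8) dvd_0_left[of "dim M"] unfolding M_def N_def by metis
  then have "\<not> N \<subseteq> {0}"
    by simp
  then obtain s where "s \<in> N" "s \<noteq> 0"
    by blast
  with \<open>x \<in> M\<close> \<open>x \<noteq> 0\<close> have "even (card M) \<longleftrightarrow> even (card N)"
    using even_card_subspace_iff[of M x] even_card_subspace_iff[of N s] assms(5,6) finite_L
    by (simp add: M_def N_def)
  with \<open>x \<in> M\<close> \<open>N \<subseteq> M\<close> \<open>x \<notin> N\<close> have "odd (card (M - N - {x}))"
    using finite_L by (intro odd_card_Diff_Diff_singleton) auto
  moreover have "even (graph_degree (UNIV - nil sc br)
      (\<lambda>x y. nilpotent_alg sc br (gen2 sc br x y)) x)"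
    using eulerian unfolding nilpotent_graph_eulerian_def by (rule eulerian_imp_even_degree)
  ultimately show False
    by (simp add: nilpotent_graph_degree[OF x] M_def N_def)
qed

end
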